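(* Consider an attack graph $G=(V,\mathcal{E})$ with source $v_s$ and a single defender $D_k$ owning assets $V_k\subseteq V\setminus\{v_s\}$ with losses $L_m\in[0,\infty)$, with investment vector $x_k=(x_{i,j})_{(v_i,v_j)\in\mathcal{E}}\in\mathbb{R}^{|\mathcal{E}|}_{\ge0}$. Assume every edge attack success probability function $p_{i,j}:[0,\infty)\to[0,1]$ is log-convex, strictly decreasing, and twice continuously differentiable on $[0,\infty)$, and let $\alpha_k\in(0,1]$. Then the perceived expected cost $$C_k(x_k)=\sum_{v_m\in V_k}L_m\max_{P\in\mathcal{P}_m}\prod_{(v_i,v_j)\in P}\exp\Big[-\big(-\log p_{i,j}(x_{i,j})\big)^{\alpha_k}\Big]$$ is convex in $x_k$.
   Context: An attack graph is a finite directed graph with a designated source node $v_s$; $\mathcal{P}_m$ denotes the (nonempty) set of directed paths from $v_s$ to $v_m$, each path viewed as its set of edges. $p_{i,j}(x_{i,j})$ is the probability that an attack from $v_i$ on $v_j$ succeeds given investment $x_{i,j}$ on that edge; $p\mapsto\exp[-(-\log p)^{\alpha_k}]$ is the Prelec probability weighting function. *)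

theory Defs
  imports "HOL-Analysis.Analysis"
begin

definition is_dpath :: "('v \<times> 'v) set \<Rightarrow> 'v \<Rightarrow> 'v \<Rightarrow> 'v list \<Rightarrow> bool" where
  "is_dpath E s t ws \<longleftrightarrow> ws \<noteq> [] \<and> hd ws = s \<and> last ws = t \<and> distinct ws
     \<and> set (zip ws (tl ws)) \<subseteq> E"

definition dpaths :: "('v \<times> 'v) set \<Rightarrow> 'v \<Rightarrow> 'v \<Rightarrow> ('v \<times> 'v) set set" where
  "dpaths E s t = {set (zip ws (tl ws)) | ws. is_dpath E s t ws}"

definition prelec :: "real \<Rightarrow> real \<Rightarrow> real" where
  "prelec \<alpha> q = exp (- ((- ln q) powr \<alpha>))"

definition log_convex_on :: "real set \<Rightarrow> (real \<Rightarrow> real) \<Rightarrow> bool" where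
  "log_convex_on S f \<longleftrightarrow> (\<forall>x\<in>S. f x > 0) \<and> convex_on S (\<lambda>x. ln (f x))"

definition C2_on :: "real set \<Rightarrow> (real \<Rightarrow> real) \<Rightarrow> bool" where
  "C2_on S f \<longleftrightarrow> (\<exists>f' f''. (\<forall>x\<in>S. (f has_real_derivative f' x) (at x within S)
      \<and> (f' has_real_derivative f'' x) (at x within S)) \<and> continuous_on S f'')"

definition perceived_cost ::
  "('v \<times> 'v) set \<Rightarrow> 'v \<Rightarrow> 'v set \<Rightarrow> ('v \<Rightarrow> real) \<Rightarrow> real
     \<Rightarrow> ('v \<times> 'v \<Rightarrow> real \<Rightarrow> real) \<Rightarrow> ('v \<times> 'v \<Rightarrow> real) \<Rightarrow> real" where
  "perceived_cost E s Vk L \<alpha> p x =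
     (\<Sum>m\<in>Vk. L m * Max ((\<lambda>P. \<Prod>e\<in>P. prelec \<alpha> (p e (x e))) ` dpaths E s m))"

end

theory Submission imports Defs begin

(* Since ln p is convex and p \<le> 1, the function -ln p is concave and nonnegative; composing
   with the concave nondecreasing map u \<mapsto> u powr \<alpha> (here \<alpha> \<le> 1 is used) keeps it concave.
   Hence the logarithm of every Prelec-weighted edge probability is convex, so the product
   over a path is log-convex and in particular convex in the investments. Pointwise maxima
   and nonnegative combinations preserve convexity. *)

lemma concave_on_powr:
  assumes "0 < \<alpha>" "\<alpha> \<le> 1"
  shows "concave_on {0..} (\<lambda>x::real. x powr \<alpha>)"
proof (rule concave_on_linorderI)
  have "concave_on {0<..} (\<lambda>x::real. x powr \<alpha>)"
  proof (rule f''_le0_imp_concave)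
    fix x :: real
    assume "x \<in> {0<..}"
    then show "((\<lambda>x. x powr \<alpha>) has_real_derivative \<alpha> * x powr (\<alpha> - 1)) (at x)"
      by (simp add: has_real_derivative_powr)
    have "((\<lambda>x. x powr (\<alpha> - 1)) has_real_derivative (\<alpha> - 1) * x powr (\<alpha> - 2)) (at x)"
      using has_real_derivative_powr[of x "\<alpha> - 1"] \<open>x \<in> {0<..}\<close> by simp
    then show "((\<lambda>x. \<alpha> * x powr (\<alpha> - 1)) has_real_derivative \<alpha> * ((\<alpha> - 1) * x powr (\<alpha> - 2))) (at x)"
      by (rule DERIV_cmult)
    show "\<alpha> * ((\<alpha> - 1) * x powr (\<alpha> - 2)) \<le> 0"
      using assms by (simp add: mult_nonneg_nonpos mult_nonpos_nonneg)
  qed simp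
  fix t x y :: real
  assume t: "0 < t" "t < 1" and xy: "x \<in> {0..}" "y \<in> {0..}" "x < y"
  show "(1 - t) * x powr \<alpha> + t * y powr \<alpha> \<le> ((1 - t) *\<^sub>R x + t *\<^sub>R y) powr \<alpha>"
  proof (cases "x = 0")
    case True
    have "t \<le> t powr \<alpha>"
      using powr_mono'[of \<alpha> 1 t] t assms by simp
    then have "t * y powr \<alpha> \<le> t powr \<alpha> * y powr \<alpha>"
      by (simp add: mult_right_mono)
    then show ?thesis
      using True t xy by (simp add: powr_mult)
  next
    case False
    then show ?thesis
      using concave_onD[OF \<open>concave_on {0<..} _\<close>, of t x y] t xy by simp
  qed
qed simp

lemma concave_on_compose_mono:
  fixes g :: "real \<Rightarrow> real"
  assumes h: "concave_on S h" and hS: "h ` S \<subseteq> T" and g: "concave_on T g" and "mono_on T g"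
  shows "concave_on S (\<lambda>x. g (h x))"
  unfolding concave_on_def
proof (rule convex_onI)
  show "convex S"
    using h by (rule concave_on_imp_convex)
  fix t :: real and x y
  assume t: "0 < t" "t < 1" and "x \<in> S" "y \<in> S"
  define u where "u = (1 - t) *\<^sub>R x + t *\<^sub>R y"
  have "u \<in> S"
    unfolding u_def using \<open>convex S\<close> \<open>x \<in> S\<close> \<open>y \<in> S\<close> t by (intro convexD) auto
  then have hT: "h x \<in> T" "h y \<in> T" "h u \<in> T"
    using hS \<open>x \<in> S\<close> \<open>y \<in> S\<close> by blast+
  have "(1 - t) * h x + t * h y \<in> T"
    using concave_on_imp_convex[OF g] hT t by (intro convexD[of T, simplified]) auto
  have "(1 - t) * g (h x) + t * g (h y) \<le> g ((1 - t) * h x + t * h y)"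
    using concave_onD[OF g, of t "h x" "h y"] hT t by simp
  also have "\<dots> \<le> g (h u)"
    using concave_onD[OF h, of t x y] \<open>x \<in> S\<close> \<open>y \<in> S\<close> t
    by (intro mono_onD[OF \<open>mono_on T g\<close> \<open>(1 - t) * h x + t * h y \<in> T\<close> \<open>h u \<in> T\<close>])
       (simp add: u_def)
  finally show "- g (h u) \<le> (1 - t) * - g (h x) + t * - g (h y)"
    by simp
qed

lemma log_convex_on_prelec:
  assumes q: "log_convex_on {0..} q" and q_le_1: "\<And>w. 0 \<le> w \<Longrightarrow> q w \<le> 1"
    and "0 < \<alpha>" "\<alpha> \<le> 1"
  shows "log_convex_on {0..} (\<lambda>w. prelec \<alpha> (q w))"
proof -
  have "concave_on {0..} (\<lambda>w. (- ln (q w)) powr \<alpha>)"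
  proof (rule concave_on_compose_mono[where h = "\<lambda>w. - ln (q w)" and g = "\<lambda>u. u powr \<alpha>"])
    show "concave_on {0..} (\<lambda>w. - ln (q w))"
      using q by (simp add: log_convex_on_def concave_on_def)
    show "(\<lambda>w. - ln (q w)) ` {0..} \<subseteq> {0..}"
      using q q_le_1 by (auto simp: log_convex_on_def)
    show "concave_on {0..} (\<lambda>u. u powr \<alpha>)"
      using assms(3,4) by (rule concave_on_powr)
    show "mono_on {0..} (\<lambda>u::real. u powr \<alpha>)"
      using assms(3) by (intro mono_onI powr_mono2) auto
  qed
  then show ?thesis
    by (simp add: log_convex_on_def prelec_def concave_on_def)
qed

lemma prod_log_convex_on_combination_le:
  fixes f :: "'e \<Rightarrow> real \<Rightarrow> real"
  assumes "finite P" and "convex S" and f: "\<And>e. e \<in> P \<Longrightarrow> log_convex_on S (f e)"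
    and x: "\<And>e. e \<in> P \<Longrightarrow> x e \<in> S" and y: "\<And>e. e \<in> P \<Longrightarrow> y e \<in> S"
    and "0 \<le> t" "t \<le> 1"
  shows "(\<Prod>e\<in>P. f e (t * x e + (1 - t) * y e))
           \<le> t * (\<Prod>e\<in>P. f e (x e)) + (1 - t) * (\<Prod>e\<in>P. f e (y e))"
proof -
  define G where "G z = (\<Sum>e\<in>P. ln (f e (z e)))" for z
  have exp_G: "exp (G z) = (\<Prod>e\<in>P. f e (z e))" if "\<And>e. e \<in> P \<Longrightarrow> z e \<in> S" for z
    using that f \<open>finite P\<close> by (simp add: G_def exp_sum log_convex_on_def)
  have xy: "t * x e + (1 - t) * y e \<in> S" if "e \<in> P" for e
    using convexD[OF \<open>convex S\<close> x[OF that] y[OF that], of t "1 - t"] \<open>0 \<le> t\<close> \<open>t \<le> 1\<close> by simp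
  have "G (\<lambda>e. t * x e + (1 - t) * y e) \<le> t * G x + (1 - t) * G y"
    unfolding G_def sum_distrib_left sum.distrib[symmetric]
  proof (rule sum_mono)
    fix e assume "e \<in> P"
    then show "ln (f e (t * x e + (1 - t) * y e)) \<le> t * ln (f e (x e)) + (1 - t) * ln (f e (y e))"
      using convex_onD[of S "\<lambda>w. ln (f e w)" "1 - t" "x e" "y e"] f x y \<open>0 \<le> t\<close> \<open>t \<le> 1\<close>
      by (simp add: log_convex_on_def)
  qed
  then have "exp (G (\<lambda>e. t * x e + (1 - t) * y e)) \<le> exp ((1 - t) *\<^sub>R G y + t *\<^sub>R G x)"
    by (simp add: algebra_simps)
  also have "\<dots> \<le> t * exp (G x) + (1 - t) * exp (G y)"
    using convex_onD[OF exp_convex, of t "G y" "G x"] \<open>0 \<le> t\<close> \<open>t \<le> 1\<close> by simp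
  finally show ?thesis
    by (simp only: exp_G[OF xy] exp_G[OF x] exp_G[OF y])
qed

lemma prod_prelec_combination_le:
  fixes q :: "'e \<Rightarrow> real \<Rightarrow> real"
  assumes "finite P" and q: "\<And>e. e \<in> P \<Longrightarrow> log_convex_on {0..} (q e)"
    and q_le_1: "\<And>e w. e \<in> P \<Longrightarrow> 0 \<le> w \<Longrightarrow> q e w \<le> 1"
    and "\<And>e. e \<in> P \<Longrightarrow> 0 \<le> x e" "\<And>e. e \<in> P \<Longrightarrow> 0 \<le> y e"
    and "0 < \<alpha>" "\<alpha> \<le> 1" "0 \<le> t" "t \<le> 1"
  shows "(\<Prod>e\<in>P. prelec \<alpha> (q e (t * x e + (1 - t) * y e)))
           \<le> t * (\<Prod>e\<in>P. prelec \<alpha> (q e (x e))) + (1 - t) * (\<Prod>e\<in>P. prelec \<alpha> (q e (y e)))"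
proof (rule prod_log_convex_on_combination_le[where S = "{0..}"])
  fix e
  assume "e \<in> P"
  show "log_convex_on {0..} (\<lambda>w. prelec \<alpha> (q e w))"
    using q[OF \<open>e \<in> P\<close>] q_le_1[OF \<open>e \<in> P\<close>] assms(6,7) by (rule log_convex_on_prelec)
qed (use assms in simp_all)

lemma Max_image_combination_le:
  fixes f g h :: "'a \<Rightarrow> real"
  assumes "finite D" "D \<noteq> {}" and fgh: "\<And>P. P \<in> D \<Longrightarrow> f P \<le> t * g P + (1 - t) * h P"
    and "0 \<le> t" "t \<le> 1"
  shows "Max (f ` D) \<le> t * Max (g ` D) + (1 - t) * Max (h ` D)"
proof -
  have "Max (f ` D) \<in> f ` D"
    using assms(1,2) by simp
  then obtain P where P: "P \<in> D" "Max (f ` D) = f P"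
    by auto
  have "g P \<le> Max (g ` D)" "h P \<le> Max (h ` D)"
    using P assms(1) by auto
  then have "t * g P + (1 - t) * h P \<le> t * Max (g ` D) + (1 - t) * Max (h ` D)"
    using assms(4,5) by (intro add_mono mult_left_mono) auto
  then show ?thesis
    using fgh[OF P(1)] P(2) by linarith
qed

lemma sum_nonneg_weighted_combination_le:
  fixes f g h L :: "'a \<Rightarrow> real"
  assumes "\<And>m. m \<in> M \<Longrightarrow> 0 \<le> L m" and "\<And>m. m \<in> M \<Longrightarrow> f m \<le> t * g m + (1 - t) * h m"
  shows "(\<Sum>m\<in>M. L m * f m) \<le> t * (\<Sum>m\<in>M. L m * g m) + (1 - t) * (\<Sum>m\<in>M. L m * h m)"
proof -
  have "(\<Sum>m\<in>M. L m * f m) \<le> (\<Sum>m\<in>M. L m * (t * g m + (1 - t) * h m))"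
    using assms by (intro sum_mono mult_left_mono) auto
  also have "\<dots> = (\<Sum>m\<in>M. t * (L m * g m) + (1 - t) * (L m * h m))"
    by (intro sum.cong refl) (simp add: algebra_simps)
  also have "\<dots> = t * (\<Sum>m\<in>M. L m * g m) + (1 - t) * (\<Sum>m\<in>M. L m * h m)"
    by (simp add: sum.distrib sum_distrib_left)
  finally show ?thesis .
qed

lemma dpaths_subset: "P \<in> dpaths E s t \<Longrightarrow> P \<subseteq> E"
  by (auto simp: dpaths_def is_dpath_def)

lemma finite_dpaths: "finite E \<Longrightarrow> finite (dpaths E s t)"
  by (meson PowI dpaths_subset finite_Pow_iff finite_subset subsetI)

theorem lemma2:
  fixes V :: "'v set" and E :: "('v \<times> 'v) set" and vs :: 'v and Vk :: "'v set"
    and L :: "'v \<Rightarrow> real" and p :: "'v \<times> 'v \<Rightarrow> real \<Rightarrow> real" and \<alpha> :: real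
  assumes "finite V" and "E \<subseteq> V \<times> V" and "vs \<in> V"
    and "Vk \<subseteq> V - {vs}"
    and "\<And>m. m \<in> Vk \<Longrightarrow> dpaths E vs m \<noteq> {}"
    and "\<And>m. m \<in> Vk \<Longrightarrow> L m \<ge> 0"
    and "\<And>e y. e \<in> E \<Longrightarrow> y \<ge> 0 \<Longrightarrow> p e y \<in> {0..1}"
    and "\<And>e. e \<in> E \<Longrightarrow> log_convex_on {0..} (p e)"
    and "\<And>e. e \<in> E \<Longrightarrow> strict_antimono_on {0..} (p e)"
    and "\<And>e. e \<in> E \<Longrightarrow> C2_on {0..} (p e)"
    and "0 < \<alpha>" and "\<alpha> \<le> 1"
  shows "\<And>x y t. (\<forall>e\<in>E. x e \<ge> 0) \<Longrightarrow> (\<forall>e\<in>E. y e \<ge> 0)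
           \<Longrightarrow> (\<forall>e. e \<notin> E \<longrightarrow> x e = 0) \<Longrightarrow> (\<forall>e. e \<notin> E \<longrightarrow> y e = 0)
           \<Longrightarrow> 0 \<le> t \<Longrightarrow> t \<le> 1 \<Longrightarrow>
           perceived_cost E vs Vk L \<alpha> p (\<lambda>e. t * x e + (1 - t) * y e)
             \<le> t * perceived_cost E vs Vk L \<alpha> p x + (1 - t) * perceived_cost E vs Vk L \<alpha> p y"
proof -
  fix x y :: "'v \<times> 'v \<Rightarrow> real" and t :: real
  assume x: "\<forall>e\<in>E. x e \<ge> 0" and y: "\<forall>e\<in>E. y e \<ge> 0" and t: "0 \<le> t" "t \<le> 1"
  define path_prob where "path_prob z P = (\<Prod>e\<in>P. prelec \<alpha> (p e (z e)))" for z P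
  have "finite E"
    using assms(1,2) finite_subset by (metis finite_SigmaI)
  have path_convex: "path_prob (\<lambda>e. t * x e + (1 - t) * y e) P
      \<le> t * path_prob x P + (1 - t) * path_prob y P" if "P \<subseteq> E" for P
    unfolding path_prob_def
    using finite_subset[OF that \<open>finite E\<close>] assms(7,8,11,12) x y t that
    by (intro prod_prelec_combination_le) (auto simp: subset_iff)
  have Max_convex: "Max (path_prob (\<lambda>e. t * x e + (1 - t) * y e) ` dpaths E vs m)
      \<le> t * Max (path_prob x ` dpaths E vs m) + (1 - t) * Max (path_prob y ` dpaths E vs m)"
    if "m \<in> Vk" for m
    using finite_dpaths[OF \<open>finite E\<close>] assms(5)[OF that] path_convex[OF dpaths_subset] t
    by (rule Max_image_combination_le)
  show "perceived_cost E vs Vk L \<alpha> p (\<lambda>e. t * x e + (1 - t) * y e)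
          \<le> t * perceived_cost E vs Vk L \<alpha> p x + (1 - t) * perceived_cost E vs Vk L \<alpha> p y"
    unfolding perceived_cost_def path_prob_def[symmetric]
    using assms(6) Max_convex by (rule sum_nonneg_weighted_combination_le)
qed

end
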